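(* Let $2\le N\le L-1$, let $x>0$, and let $r_1,\dots,r_{L-N},\ell_1,\dots,\ell_{L-N}$ be real parameters. Define $r,\ell:\{0,1,\dots,L-N\}^2\to\mathbb{R}$ (on pairs $(k,n)$ with $k+n\le L-N$) by $r(0,n)=\ell(0,n)=0$ for $n\ge 0$; $r(k,0)=r_k$, $\ell(k,0)=\ell_k$ for $k\ge 1$; $r(1,n)=x\,r_{n+1}$, $\ell(1,n)=x\,\ell_{n+1}$ for $n\ge1$; and for $k\ge 2$, $n\ge 1$, $$r(k,n)=x\,r_{n+k}+\sum_{j=n+1}^{n+k-1} r_j-\sum_{j=1}^{k-1} r_j,\qquad \ell(k,n)=x\,\ell_{n+k}+\sum_{j=n+1}^{n+k-1} \ell_j-\sum_{j=1}^{k-1} \ell_j .$$ Assume all these values are nonnegative. Consider the exclusion process on $\Omega_{L,N}$ in which, independently, particle $i$ jumps one site to the right at rate $r(h_i,h_{i-1})$ and one site to the left at rate $\ell(h_{i-1},h_i)$. Then the probability measure $$\hat\pi(\boldsymbol\eta)=\frac{1}{Z}\,x^{\sum_{j\in\mathbb{T}_L}\eta_j\eta_{j+1}},\qquad \boldsymbol\eta\in\Omega_{L,N},$$ with $Z$ the normalizing constant, is an invariant (stationary) measure of this process.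
   Context: $\mathbb{T}_L=\mathbb{Z}/L\mathbb{Z}$ is the ring with $L$ sites. $\Omega_{L,N}$ is the set of configurations $\boldsymbol\eta=(\eta_j)_{j\in\mathbb{T}_L}\in\{0,1\}^{\mathbb{T}_L}$ with $\sum_j\eta_j=N$ ($\eta_j=1$ means site $j$ is occupied by a particle). Particles are labeled $1,\dots,N$ in cyclic (increasing) order, with positions $p_1,\dots,p_N$, labels taken mod $N$. The headway $h_i$ is the number of empty sites between particle $i$ and particle $i+1$ (so $h_i\ge0$ and $\sum_i h_i=L-N$); $h_{i-1}$ is the number of empty sites between particle $i-1$ and particle $i$. A right jump of particle $i$ moves it from $p_i$ to $p_i+1$ (possible only if $h_i\ge1$), a left jump moves it to $p_i-1$ (possible only if $h_{i-1}\ge1$); the process is the continuous-time Markov chain with these jumps. Note $\sum_j\eta_j\eta_{j+1}=\#\{i: h_i=0\}$. *)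

theory Defs
  imports Complex_Main
begin

text \<open>Configurations on the ring of L sites 0..L-1 (arithmetic mod L) are functions
  nat => nat with values in {0,1}, vanishing outside {0..<L}.\<close>

definition Omega :: "nat \<Rightarrow> nat \<Rightarrow> (nat \<Rightarrow> nat) set" where
  "Omega L N = {\<eta>. (\<forall>j. \<eta> j \<le> 1) \<and> (\<forall>j\<ge>L. \<eta> j = 0) \<and> (\<Sum>j<L. \<eta> j) = N}"

definition rate :: "(nat \<Rightarrow> real) \<Rightarrow> real \<Rightarrow> nat \<Rightarrow> nat \<Rightarrow> real" where
  "rate rs x k n =
     (if k = 0 then 0
      else if n = 0 then rs k
      else if k = 1 then x * rs (n + 1)
      else x * rs (n + k) + (\<Sum>j\<in>{n+1..n+k-1}. rs j) - (\<Sum>j\<in>{1..k-1}. rs j))"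

definition hR :: "nat \<Rightarrow> (nat \<Rightarrow> nat) \<Rightarrow> nat \<Rightarrow> nat" where
  "hR L \<eta> p = (LEAST k. \<eta> ((p + Suc k) mod L) = 1)"

definition hL :: "nat \<Rightarrow> (nat \<Rightarrow> nat) \<Rightarrow> nat \<Rightarrow> nat" where
  "hL L \<eta> p = (LEAST k. \<eta> ((p + (L - Suc k)) mod L) = 1)"

definition swap_sites :: "(nat \<Rightarrow> nat) \<Rightarrow> nat \<Rightarrow> nat \<Rightarrow> (nat \<Rightarrow> nat)" where
  "swap_sites \<eta> a b = \<eta>(a := \<eta> b, b := \<eta> a)"

text \<open>Transition rate from \<eta> to \<eta>': particle at p jumps right at rate r(h_i, h_{i-1})
  and left at rate l(h_{i-1}, h_i).\<close>
definition Q :: "nat \<Rightarrow> (nat \<Rightarrow> real) \<Rightarrow> (nat \<Rightarrow> real) \<Rightarrow> real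
                 \<Rightarrow> (nat \<Rightarrow> nat) \<Rightarrow> (nat \<Rightarrow> nat) \<Rightarrow> real" where
  "Q L rs ls x \<eta> \<eta>' =
     (\<Sum>p<L.
        (if \<eta> p = 1 \<and> \<eta> ((p + 1) mod L) = 0 \<and> \<eta>' = swap_sites \<eta> p ((p + 1) mod L)
         then rate rs x (hR L \<eta> p) (hL L \<eta> p) else 0)
      + (if \<eta> p = 1 \<and> \<eta> ((p + (L - 1)) mod L) = 0 \<and> \<eta>' = swap_sites \<eta> p ((p + (L - 1)) mod L)
         then rate ls x (hL L \<eta> p) (hR L \<eta> p) else 0))"

definition invariant_measure :: "'s set \<Rightarrow> ('s \<Rightarrow> 's \<Rightarrow> real) \<Rightarrow> ('s \<Rightarrow> real) \<Rightarrow> bool" where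
  "invariant_measure S q \<pi> \<longleftrightarrow>
     (\<forall>\<eta>\<in>S. (\<Sum>\<eta>'\<in>S. \<pi> \<eta>' * q \<eta>' \<eta>) = (\<Sum>\<eta>'\<in>S. \<pi> \<eta> * q \<eta> \<eta>'))"

definition nn_pairs :: "nat \<Rightarrow> (nat \<Rightarrow> nat) \<Rightarrow> nat" where
  "nn_pairs L \<eta> = (\<Sum>j<L. \<eta> j * \<eta> ((j + 1) mod L))"

definition pihat :: "nat \<Rightarrow> nat \<Rightarrow> real \<Rightarrow> (nat \<Rightarrow> nat) \<Rightarrow> real" where
  "pihat L N x \<eta> = x ^ nn_pairs L \<eta> / (\<Sum>\<zeta>\<in>Omega L N. x ^ nn_pairs L \<zeta>)"

end

theory Submission
  imports Defs
begin

(* Global balance holds separately for right jumps and for left jumps. Fix a jump direction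
   and a particle at site q whose headway is a in front of it and b behind it. The flow out of
   a configuration by this particle's jump has weight x^nn r(a,b). The flow into it through a
   jump landing at q comes from the configuration in which the particle sat one site further
   back: there the headways are a+1 and b-1 and the nearest-neighbour count is smaller by
   [a = 0] - [b = 1]. The form of the rates makes the difference of the two flows equal to
   x^nn (r(a,0) - r(b,0)), and summing over particles telescopes to zero, because the headway
   in front of one particle is the headway behind the next. Both directions are handled by one
   argument, measuring headways in a direction d \<in> {1, -1}. *)

section \<open>Sites of the ring\<close>

definition shift :: "nat \<Rightarrow> int \<Rightarrow> nat \<Rightarrow> nat" where
  "shift L d p = nat ((int p + d) mod int L)"

lemma shift_less: "0 < L \<Longrightarrow> shift L d p < L"
  by (simp add: shift_def nat_less_iff)

lemma shift_shift: "0 < L \<Longrightarrow> shift L a (shift L b p) = shift L (a + b) p"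
  by (simp add: shift_def mod_add_right_eq ac_simps)

lemma shift_zero: "p < L \<Longrightarrow> shift L 0 p = p"
  by (simp add: shift_def)

lemma shift_of_nat: "shift L (int k) p = (p + k) mod L"
  by (simp add: shift_def flip: of_nat_add of_nat_mod)

lemma shift_minus: "k \<le> L \<Longrightarrow> (p + (L - k)) mod L = shift L (- int k) p"
proof -
  assume "k \<le> L"
  then have "int ((p + (L - k)) mod L) = (int p - int k + int L) mod int L"
    by (simp add: of_nat_mod of_nat_diff algebra_simps)
  then show ?thesis by (simp add: shift_def)
qed

lemma shift_eq_shift_iff: "0 < L \<Longrightarrow> shift L a p = shift L b p \<longleftrightarrow> int L dvd a - b"
  by (simp add: shift_def nat_eq_iff2 mod_eq_dvd_iff dvd_diff_commute)

lemma shift_inj: "shift L a p = shift L b p \<Longrightarrow> \<bar>a - b\<bar> < int L \<Longrightarrow> a = b"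
  using shift_eq_shift_iff[of L a p b] dvd_imp_le_int[of "a - b" "int L"] by fastforce

lemma sum_shift:
  assumes "0 < L"
  shows "(\<Sum>q<L. g (shift L a q)) = (\<Sum>q<L. g q)"
proof (rule sum.reindex_bij_betw)
  show "bij_betw (shift L a) {..<L} {..<L}"
    by (rule bij_betw_byWitness[where f' = "shift L (- a)"])
       (auto simp: assms shift_shift shift_zero shift_less)
qed

lemma shift_mult_self: "p < L \<Longrightarrow> shift L (a * int L) p = p"
  by (simp add: shift_def)

section \<open>Headways\<close>

lemma Least_cong_upto:
  fixes P Q :: "nat \<Rightarrow> bool"
  assumes "P m" and agree: "\<And>k. k \<le> m \<Longrightarrow> P k \<longleftrightarrow> Q k"
  shows "(LEAST k. P k) = (LEAST k. Q k)"
proof (rule Least_equality[symmetric])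
  have le: "(LEAST k. P k) \<le> m" using assms(1) by (rule Least_le)
  show "Q (LEAST k. P k)" using LeastI[of P, OF assms(1)] agree[OF le] by simp
  show "(LEAST k. P k) \<le> y" if "Q y" for y
  proof (rule ccontr)
    assume "\<not> (LEAST k. P k) \<le> y"
    then have "y < (LEAST k. P k)" by simp
    then show False using not_less_Least[of y P] agree[of y] le \<open>Q y\<close> by simp
  qed
qed

definition gap :: "nat \<Rightarrow> (nat \<Rightarrow> nat) \<Rightarrow> int \<Rightarrow> nat \<Rightarrow> nat" where
  "gap L \<eta> d p = (LEAST k. \<eta> (shift L (d * int (Suc k)) p) = 1)"

lemma hR_eq_gap: "hR L \<eta> p = gap L \<eta> 1 p"
  by (simp add: hR_def gap_def shift_of_nat del: of_nat_Suc)

lemma hL_eq_gap: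
  assumes "p < L" "\<eta> p = 1"
  shows "hL L \<eta> p = gap L \<eta> (-1) p"
  unfolding hL_def gap_def
proof (rule Least_cong_upto[where m = "L - 1"])
  show "\<eta> ((p + (L - Suc (L - 1))) mod L) = 1" using assms by simp
  show "\<eta> ((p + (L - Suc k)) mod L) = 1 \<longleftrightarrow> \<eta> (shift L (- 1 * int (Suc k)) p) = 1"
    if "k \<le> L - 1" for k
  proof -
    have "Suc k \<le> L" using that assms(1) by linarith
    then show ?thesis by (simp only: shift_minus mult_minus1)
  qed
qed

lemma gap_occupied:
  "\<eta> (shift L (d * int (Suc k)) p) = 1 \<Longrightarrow> \<eta> (shift L (d * int (Suc (gap L \<eta> d p))) p) = 1"
  unfolding gap_def by (rule LeastI)

lemma gap_occupied_self:
  assumes "p < L" "\<eta> p = 1"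
  shows "\<eta> (shift L (d * int (Suc (gap L \<eta> d p))) p) = 1"
proof (rule gap_occupied)
  show "\<eta> (shift L (d * int (Suc (L - 1))) p) = 1" using assms by (simp add: shift_mult_self)
qed

lemma gap_le: "\<eta> (shift L (d * int (Suc k)) p) = 1 \<Longrightarrow> gap L \<eta> d p \<le> k"
  unfolding gap_def by (rule Least_le)

lemma less_gap_empty: "i < gap L \<eta> d p \<Longrightarrow> \<eta> (shift L (d * int (Suc i)) p) \<noteq> 1"
  unfolding gap_def by (rule not_less_Least)

lemma gap_eq_iff:
  assumes "p < L" "\<eta> p = 1"
  shows "gap L \<eta> d p = k \<longleftrightarrow>
    \<eta> (shift L (d * int (Suc k)) p) = 1 \<and> (\<forall>i<k. \<eta> (shift L (d * int (Suc i)) p) \<noteq> 1)"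
proof
  have "\<eta> (shift L (d * int (Suc (L - 1))) p) = 1"
    using assms by (simp add: shift_mult_self)
  then show "gap L \<eta> d p = k \<Longrightarrow>
    \<eta> (shift L (d * int (Suc k)) p) = 1 \<and> (\<forall>i<k. \<eta> (shift L (d * int (Suc i)) p) \<noteq> 1)"
    using gap_occupied less_gap_empty by blast
  show "gap L \<eta> d p = k" if "\<eta> (shift L (d * int (Suc k)) p) = 1 \<and> (\<forall>i<k. \<eta> (shift L (d * int (Suc i)) p) \<noteq> 1)"
    unfolding gap_def by (rule Least_equality) (use that not_less in blast)+
qed

lemma gap_eq_0_iff: "p < L \<Longrightarrow> \<eta> p = 1 \<Longrightarrow> gap L \<eta> d p = 0 \<longleftrightarrow> \<eta> (shift L d p) = 1"
  using gap_eq_iff[of p L \<eta> d 0] by simp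

section \<open>Jumps\<close>

lemma swap_sites_commute: "swap_sites \<eta> a b = swap_sites \<eta> b a"
  by (auto simp: swap_sites_def fun_eq_iff)

lemma swap_sites_swap_sites: "swap_sites (swap_sites \<eta> a b) a b = \<eta>"
  by (auto simp: swap_sites_def fun_eq_iff)

lemma swap_sites_jump_iff:
  assumes "a \<noteq> b"
  shows "(\<eta>' a = 1 \<and> \<eta>' b = 0 \<and> \<eta> = swap_sites \<eta>' a b) \<longleftrightarrow> (\<eta>' = swap_sites \<eta> a b \<and> \<eta> a = 0 \<and> \<eta> b = 1)"
proof
  assume "\<eta>' a = 1 \<and> \<eta>' b = 0 \<and> \<eta> = swap_sites \<eta>' a b"
  then show "\<eta>' = swap_sites \<eta> a b \<and> \<eta> a = 0 \<and> \<eta> b = 1"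
    using assms by (simp add: swap_sites_swap_sites) (simp add: swap_sites_def)
next
  assume "\<eta>' = swap_sites \<eta> a b \<and> \<eta> a = 0 \<and> \<eta> b = 1"
  then show "\<eta>' a = 1 \<and> \<eta>' b = 0 \<and> \<eta> = swap_sites \<eta>' a b"
    using assms by (simp add: swap_sites_swap_sites) (simp add: swap_sites_def)
qed

lemma finite_Omega: "finite (Omega L N)"
proof (rule finite_subset)
  show "Omega L N \<subseteq> (\<lambda>S j. if j \<in> S then 1 else 0) ` Pow {..<L}"
  proof
    fix \<eta> assume \<eta>: "\<eta> \<in> Omega L N"
    then have "\<eta> = (\<lambda>j. if j \<in> {j. \<eta> j = 1} then 1 else 0)"
      by (force simp: Omega_def fun_eq_iff le_Suc_eq)
    moreover have "{j. \<eta> j = 1} \<subseteq> {..<L}"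
      using \<eta> by (force simp: Omega_def not_less[symmetric])
    ultimately show "\<eta> \<in> (\<lambda>S j. if j \<in> S then 1 else 0) ` Pow {..<L}" by blast
  qed
qed simp

lemma swap_sites_in_Omega:
  assumes "\<eta> \<in> Omega L N" "a < L" "b < L"
  shows "swap_sites \<eta> a b \<in> Omega L N"
proof (cases "a = b")
  case True
  then show ?thesis using assms by (simp add: swap_sites_def)
next
  case False
  let ?s = "swap_sites \<eta> a b"
  have sub: "{a, b} \<subseteq> {..<L}" using assms by auto
  have "(\<Sum>j<L. ?s j) = (\<Sum>j\<in>{..<L} - {a, b}. ?s j) + (\<Sum>j\<in>{a, b}. ?s j)"
    by (rule sum.subset_diff[OF sub]) simp
  also have "\<dots> = (\<Sum>j\<in>{..<L} - {a, b}. \<eta> j) + (\<Sum>j\<in>{a, b}. \<eta> j)"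
    using False by (simp add: swap_sites_def)
  also have "\<dots> = (\<Sum>j<L. \<eta> j)"
    by (rule sum.subset_diff[OF sub, symmetric]) simp
  finally show ?thesis using assms by (auto simp: Omega_def swap_sites_def)
qed

lemma swap_sites_shift_apart:
  assumes "q < L" "c \<noteq> 0" "c \<noteq> d" "\<bar>c\<bar> < int L" "\<bar>c - d\<bar> < int L"
  shows "swap_sites \<eta> q (shift L d q) (shift L c q) = \<eta> (shift L c q)"
proof -
  have "shift L c q \<noteq> q" using shift_inj[of L c q 0] assms by (auto simp: shift_zero)
  moreover have "shift L c q \<noteq> shift L d q" using shift_inj[of L c q d] assms by auto
  ultimately show ?thesis by (simp add: swap_sites_def)
qed

definition jump_rate :: "nat \<Rightarrow> (nat \<Rightarrow> nat \<Rightarrow> real) \<Rightarrow> int \<Rightarrow> (nat \<Rightarrow> nat) \<Rightarrow> (nat \<Rightarrow> nat) \<Rightarrow> real" where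
  "jump_rate L R d \<eta> \<eta>' =
     (\<Sum>p<L. if \<eta> p = 1 \<and> \<eta> (shift L d p) = 0 \<and> \<eta>' = swap_sites \<eta> p (shift L d p)
            then R (gap L \<eta> d p) (gap L \<eta> (-d) p) else 0)"

lemma Q_eq_jump_rates:
  assumes "0 < L"
  shows "Q L rs ls x \<eta> \<eta>' = jump_rate L (rate rs x) 1 \<eta> \<eta>' + jump_rate L (rate ls x) (-1) \<eta> \<eta>'"
  unfolding Q_def jump_rate_def sum.distrib[symmetric]
  using shift_of_nat[of L 1] shift_minus[of 1 L] assms
  by (intro sum.cong refl) (auto simp: hR_eq_gap hL_eq_gap)

lemma nn_pairs_eq_sum_shift: "nn_pairs L \<eta> = (\<Sum>j<L. \<eta> j * \<eta> (shift L 1 j))"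
  using shift_of_nat[of L 1] by (simp add: nn_pairs_def)

lemma nn_pairs_swap_adjacent:
  assumes L: "3 \<le> L" and u: "u < L"
  defines "v \<equiv> shift L 1 u" and "w \<equiv> shift L (-1) u"
  shows "nn_pairs L (swap_sites \<eta> u v) + \<eta> w * \<eta> u + \<eta> v * \<eta> (shift L 1 v)
       = nn_pairs L \<eta> + \<eta> w * \<eta> v + \<eta> u * \<eta> (shift L 1 v)"
proof -
  let ?s = "swap_sites \<eta> u v"
  define bond where "bond f j = f j * f (shift L 1 j)" for f :: "nat \<Rightarrow> nat" and j
  have L0: "0 < L" using L by simp
  have shift_eq: "shift L c u = shift L c' u \<longleftrightarrow> c = c'" if "\<bar>c - c'\<bar> < int L" for c c'
    using shift_inj that by blast
  have u0: "shift L 0 u = u" using u by (rule shift_zero)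
  have w1: "shift L 1 w = u" unfolding w_def by (simp add: shift_shift L0 u0)
  have wu: "w \<noteq> u" and wv: "w \<noteq> v" and uv: "u \<noteq> v" and v1u: "shift L 1 v \<noteq> u"
    and v1v: "shift L 1 v \<noteq> v"
    unfolding v_def w_def using shift_eq[of "-1" 0] shift_eq[of "-1" 1] shift_eq[of 0 1] shift_eq[of 2 0] shift_eq[of 2 1] L
    by (auto simp: u0 shift_shift L0)
  have sub: "{w, u, v} \<subseteq> {..<L}" using u L0 by (auto simp: v_def w_def shift_less)
  have bonds_split: "(\<Sum>j<L. bond f j) = (\<Sum>j\<in>{..<L} - {w, u, v}. bond f j) + bond f w + bond f u + bond f v"
    for f
    using sum.subset_diff[OF sub, of "bond f"] wu wv uv by (simp add: add.assoc)
  have undo: "shift L (-1) (shift L 1 i) = i" if "i < L" for i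
    using that L0 by (simp add: shift_shift shift_zero)
  have rest: "bond ?s j = bond \<eta> j" if j: "j \<in> {..<L} - {w, u, v}" for j
  proof -
    have "shift L 1 j \<noteq> u" using undo[of j] j by (auto simp: w_def)
    moreover have "shift L 1 j \<noteq> v" using undo[of j] undo[OF u] j by (auto simp: v_def)
    ultimately show ?thesis using j by (simp add: bond_def swap_sites_def)
  qed
  have "nn_pairs L ?s = (\<Sum>j\<in>{..<L} - {w, u, v}. bond \<eta> j) + bond ?s w + bond ?s u + bond ?s v"
    unfolding nn_pairs_eq_sum_shift bond_def[symmetric] bonds_split using rest by simp
  moreover have "nn_pairs L \<eta> = (\<Sum>j\<in>{..<L} - {w, u, v}. bond \<eta> j) + bond \<eta> w + bond \<eta> u + bond \<eta> v"
    unfolding nn_pairs_eq_sum_shift bond_def[symmetric] bonds_split ..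
  ultimately show ?thesis
    using wu wv uv v1u v1v by (simp add: bond_def swap_sites_def w1 v_def[symmetric] algebra_simps)
qed

section \<open>Rates\<close>

lemma rate_0_left [simp]: "rate rs x 0 n = 0"
  by (simp add: rate_def)

(* Out-flow r(a,b) against in-flow r(a+1,b-1), weighted by the change of x^nn: this is the
   identity the rates are designed for. *)
lemma rate_shift_identity:
  assumes "1 \<le> b"
  shows "(if a = 0 then x else 1) * rate rs x a b - (if b = 1 then x else 1) * rate rs x (Suc a) (b - 1)
       = (if a = 0 then x else 1) * (rate rs x a 0 - rate rs x b 0)"
proof -
  consider "a = 0" | "a = 1" | "a \<ge> 2" by linarith
  then show ?thesis
  proof cases
    case 1
    then show ?thesis using assms by (simp add: rate_def)
  next
    case 2
    then show ?thesis using assms by (simp add: rate_def)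
  next
    case a: 3
    have first: "(\<Sum>j\<in>{1..a}. rs j) = (\<Sum>j\<in>{1..a-1}. rs j) + rs a"
      using a by (cases a) (auto simp: sum.cl_ivl_Suc)
    have last: "(\<Sum>j\<in>{b..a+b-1}. rs j) = rs b + (\<Sum>j\<in>{b+1..a+b-1}. rs j)"
      using a by (subst sum.atLeast_Suc_atMost) auto
    have head: "(\<Sum>j\<in>{1..a}. rs j) = rs 1 + (\<Sum>j\<in>{Suc 1..a}. rs j)"
      using a by (simp add: sum.atLeast_Suc_atMost)
    show ?thesis using a assms first last head
      by (simp add: rate_def algebra_simps)
  qed
qed

lemma rate_balance_identity:
  fixes x W W' :: real
  assumes x: "0 < x" and b: "1 \<le> b"
    and weight: "W' * (if a = 0 then x else 1) = W * (if b = 1 then x else 1)"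
  shows "W * rate rs x a b - W' * rate rs x (Suc a) (b - 1) = W * (rate rs x a 0 - rate rs x b 0)"
proof -
  define E where "E = (if a = 0 then x else 1)"
  define E' where "E' = (if b = 1 then x else 1)"
  have ident: "E * rate rs x a b - E' * rate rs x (Suc a) (b - 1) = E * (rate rs x a 0 - rate rs x b 0)"
    unfolding E_def E'_def using b by (rule rate_shift_identity)
  have "E' * (W * rate rs x a b - W' * rate rs x (Suc a) (b - 1))
      = (W * E') * rate rs x a b - W' * (E' * rate rs x (Suc a) (b - 1))"
    by (simp add: algebra_simps)
  also have "\<dots> = W' * (E * rate rs x a b - E' * rate rs x (Suc a) (b - 1))"
    unfolding weight[folded E_def E'_def, symmetric] by (simp add: algebra_simps)
  also have "\<dots> = (W' * E) * (rate rs x a 0 - rate rs x b 0)"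
    by (simp only: ident mult.assoc)
  also have "\<dots> = E' * (W * (rate rs x a 0 - rate rs x b 0))"
    by (simp add: weight[folded E_def E'_def])
  finally show ?thesis using x by (simp add: E'_def split: if_splits)
qed

section \<open>Global balance\<close>

locale particle_config =
  fixes L N :: nat and \<eta> :: "nat \<Rightarrow> nat"
  assumes two_le_N: "2 \<le> N" and N_less_L: "N < L" and config: "\<eta> \<in> Omega L N"
begin

lemma three_le_L: "3 \<le> L"
  using two_le_N N_less_L by linarith

lemma L_pos: "0 < L"
  using three_le_L by linarith

lemma ne_1_iff_eq_0 [simp]: "\<eta> j \<noteq> 1 \<longleftrightarrow> \<eta> j = 0"
  using config by (auto simp: Omega_def le_Suc_eq)

lemma other_particle:
  assumes "q < L" "\<eta> q = 1"
  obtains q' where "q' < L" "q' \<noteq> q" "\<eta> q' = 1"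
proof -
  have "N = 1 + (\<Sum>j\<in>{..<L} - {q}. \<eta> j)"
    using config assms by (simp add: Omega_def sum.remove)
  then have "(\<Sum>j\<in>{..<L} - {q}. \<eta> j) \<noteq> 0"
    using two_le_N by linarith
  then obtain q' where q': "q' \<in> {..<L} - {q}" "\<eta> q' \<noteq> 0" by (meson sum.neutral)
  then have "\<eta> q' = 1" by (metis ne_1_iff_eq_0)
  with q' show ?thesis using that by blast
qed

lemma gap_le_L_minus_2:
  assumes d: "d \<in> {1, -1}" and q: "q < L" "\<eta> q = 1"
  shows "gap L \<eta> d q \<le> L - 2"
proof -
  obtain q' where q': "q' < L" "q' \<noteq> q" "\<eta> q' = 1" using other_particle[OF q] .
  define m where "m = ((int q' - int q) * d) mod int L"
  have "(int q + d * m) mod int L = (int q + d * ((int q' - int q) * d)) mod int L"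
    unfolding m_def by (metis mod_add_right_eq mod_mult_right_eq)
  also have "int q + d * ((int q' - int q) * d) = int q'"
    using d by auto
  finally have hit: "shift L (d * m) q = q'"
    using q' by (simp add: shift_def)
  have "m \<noteq> 0" using hit q q' by (auto simp: shift_zero)
  moreover have "0 \<le> m" "m < int L" using L_pos by (simp_all add: m_def)
  ultimately have k: "m = int (Suc (nat m - 1))" "nat m - 1 \<le> L - 2" by linarith+
  show ?thesis using gap_le[of \<eta> L d "nat m - 1" q] hit q' k by simp
qed

lemma gap_behind_le_L_minus_3:
  assumes d: "d \<in> {1, -1}" and q: "q < L" "\<eta> q = 1" and target: "\<eta> (shift L d q) = 0"
  shows "gap L \<eta> (-d) q \<le> L - 3"
proof -
  define b where "b = gap L \<eta> (-d) q"
  have "b \<le> L - 2" unfolding b_def by (rule gap_le_L_minus_2) (use d q in auto)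
  moreover have "b \<noteq> L - 2"
  proof
    assume "b = L - 2"
    then have "shift L (- d * int (Suc b)) q = shift L d q"
      using L_pos three_le_L by (simp add: shift_eq_shift_iff of_nat_diff algebra_simps)
    then show False using gap_occupied_self[of q L \<eta> "-d"] q target by (simp add: b_def)
  qed
  ultimately show ?thesis unfolding b_def by linarith
qed

lemma jump_gap_ahead:
  assumes d: "d \<in> {1, -1}" and q: "q < L" "\<eta> q = 1" and target: "\<eta> (shift L d q) = 0"
  shows "gap L (swap_sites \<eta> q (shift L d q)) d (shift L d q) = gap L \<eta> d q - 1"
proof -
  let ?s = "swap_sites \<eta> q (shift L d q)"
  define a where "a = gap L \<eta> d q"
  have occ: "\<eta> (shift L (d * int (Suc a)) q) = 1" unfolding a_def using q by (rule gap_occupied_self)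
  have a_pos: "0 < a" using gap_eq_0_iff[of q L \<eta> d] q target by (simp add: a_def)
  have a_le: "a \<le> L - 2" unfolding a_def by (rule gap_le_L_minus_2[OF d q])
  have "a = Suc (LEAST j. \<eta> (shift L (d * int (Suc (Suc j))) q) = 1)"
    unfolding a_def gap_def by (rule Least_Suc) (use occ target in \<open>simp_all add: a_def gap_def\<close>)
  moreover have "(LEAST j. \<eta> (shift L (d * int (Suc (Suc j))) q) = 1) = gap L ?s d (shift L d q)"
    unfolding gap_def
  proof (rule Least_cong_upto[where m = "a - 1"])
    show "\<eta> (shift L (d * int (Suc (Suc (a - 1)))) q) = 1" using occ a_pos by simp
    show "\<eta> (shift L (d * int (Suc (Suc k))) q) = 1 \<longleftrightarrow> ?s (shift L (d * int (Suc k)) (shift L d q)) = 1"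
      if "k \<le> a - 1" for k
    proof -
      have "Suc (Suc k) < L" using that a_le a_pos by linarith
      then have "?s (shift L (d * int (Suc (Suc k))) q) = \<eta> (shift L (d * int (Suc (Suc k))) q)"
        using d q by (intro swap_sites_shift_apart) auto
      then show ?thesis using L_pos by (simp add: shift_shift algebra_simps)
    qed
  qed
  ultimately show ?thesis by (simp add: a_def)
qed

lemma jump_gap_behind:
  assumes d: "d \<in> {1, -1}" and q: "q < L" "\<eta> q = 1" and target: "\<eta> (shift L d q) = 0"
  shows "gap L (swap_sites \<eta> q (shift L d q)) (-d) (shift L d q) = Suc (gap L \<eta> (-d) q)"
proof -
  let ?s = "swap_sites \<eta> q (shift L d q)"
  define b where "b = gap L \<eta> (-d) q"
  have occ: "\<eta> (shift L (- d * int (Suc b)) q) = 1" unfolding b_def using q by (rule gap_occupied_self)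
  have b_le: "b \<le> L - 3" unfolding b_def by (rule gap_behind_le_L_minus_3[OF d q target])
  have behind: "?s (shift L (- d * int i) q) = \<eta> (shift L (- d * int i) q)" if "1 \<le> i" "i < L - 1" for i
    using d q that by (intro swap_sites_shift_apart) auto
  have "shift L d q \<noteq> q" using shift_inj[of L d q 0] d q three_le_L by (auto simp: shift_zero)
  then have vacated: "?s q = 0" using target by (simp add: swap_sites_def)
  have "gap L ?s (-d) (shift L d q) = (LEAST k. ?s (shift L (- d * int k) q) = 1)"
    unfolding gap_def using L_pos by (simp add: shift_shift algebra_simps)
  also have "\<dots> = Suc (LEAST j. ?s (shift L (- d * int (Suc j)) q) = 1)"
  proof (rule Least_Suc)
    show "?s (shift L (- d * int (Suc b)) q) = 1" using behind[of "Suc b"] occ b_le three_le_L by simp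
    show "?s (shift L (- d * int 0) q) \<noteq> 1" using vacated q by (simp add: shift_zero)
  qed
  also have "(LEAST j. ?s (shift L (- d * int (Suc j)) q) = 1) = b"
    unfolding b_def gap_def
  proof (rule Least_cong_upto[symmetric, where m = b])
    show "\<eta> (shift L (- d * int (Suc b)) q) = 1" by (rule occ)
    show "\<eta> (shift L (- d * int (Suc k)) q) = 1 \<longleftrightarrow> ?s (shift L (- d * int (Suc k)) q) = 1"
      if "k \<le> b" for k
      using behind[of "Suc k"] that b_le three_le_L by simp
  qed
  finally show ?thesis by (simp add: b_def)
qed

lemma jump_nn_pairs:
  assumes d: "d \<in> {1, -1}" and q: "q < L" "\<eta> q = 1" and target: "\<eta> (shift L d q) = 0"
  shows "nn_pairs L (swap_sites \<eta> q (shift L d q)) + \<eta> (shift L (-d) q)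
       = nn_pairs L \<eta> + \<eta> (shift L (2 * d) q)"
proof -
  have q0: "shift L 0 q = q" using q(1) by (rule shift_zero)
  from d consider "d = 1" | "d = -1" by blast
  then show ?thesis
  proof cases
    case 1
    show ?thesis using nn_pairs_swap_adjacent[OF three_le_L q(1), of \<eta>] q target 1
      by (simp add: shift_shift L_pos)
  next
    case 2
    have u: "shift L (-1) q < L" using L_pos by (rule shift_less)
    show ?thesis using nn_pairs_swap_adjacent[OF three_le_L u, of \<eta>] q target 2
      by (simp add: shift_shift L_pos q0 swap_sites_commute)
  qed
qed

lemma jump_weight:
  fixes x :: real
  assumes d: "d \<in> {1, -1}" and q: "q < L" "\<eta> q = 1" and target: "\<eta> (shift L d q) = 0"
  shows "x ^ nn_pairs L (swap_sites \<eta> q (shift L d q)) * (if gap L \<eta> (-d) q = 0 then x else 1)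
       = x ^ nn_pairs L \<eta> * (if gap L \<eta> d q = 1 then x else 1)"
proof -
  have "\<eta> (shift L (-d) q) = (if gap L \<eta> (-d) q = 0 then 1 else 0)"
    using gap_eq_0_iff[of q L \<eta> "-d"] q ne_1_iff_eq_0 by auto
  then have left: "x ^ \<eta> (shift L (-d) q) = (if gap L \<eta> (-d) q = 0 then x else 1)" by simp
  have "\<eta> (shift L (2 * d) q) = (if gap L \<eta> d q = 1 then 1 else 0)"
    using gap_eq_iff[of q L \<eta> d 1] q ne_1_iff_eq_0 target by (auto simp: mult.commute)
  then have right: "x ^ \<eta> (shift L (2 * d) q) = (if gap L \<eta> d q = 1 then x else 1)" by simp
  have "x ^ nn_pairs L (swap_sites \<eta> q (shift L d q)) * x ^ \<eta> (shift L (-d) q)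
      = x ^ nn_pairs L \<eta> * x ^ \<eta> (shift L (2 * d) q)"
    by (metis jump_nn_pairs[OF assms] power_add)
  then show ?thesis unfolding left right .
qed

lemma site_balance:
  fixes x :: real
  assumes x: "0 < x" and d: "d \<in> {1, -1}" and q: "q < L"
  defines "t \<equiv> shift L (-d) q"
  defines "s \<equiv> swap_sites \<eta> t q"
  shows "x ^ nn_pairs L \<eta> * (if \<eta> q = 1 \<and> \<eta> (shift L d q) = 0
                                then rate rs x (gap L \<eta> d q) (gap L \<eta> (-d) q) else 0)
       - (if \<eta> t = 0 \<and> \<eta> q = 1 then x ^ nn_pairs L s * rate rs x (gap L s d t) (gap L s (-d) t) else 0)
       = (if \<eta> q = 1 then x ^ nn_pairs L \<eta> * (rate rs x (gap L \<eta> d q) 0 - rate rs x (gap L \<eta> (-d) q) 0)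
          else 0)"
proof (cases "\<eta> q = 1")
  case False
  then show ?thesis by simp
next
  case occ: True
  define a where "a = gap L \<eta> d q"
  define b where "b = gap L \<eta> (-d) q"
  have "\<eta> (shift L d q) = 1 \<Longrightarrow> a = 0"
    using gap_eq_0_iff[of q L \<eta> d] q occ by (simp add: a_def)
  then have out: "(if \<eta> (shift L d q) = 0 then rate rs x a b else 0) = rate rs x a b"
    using ne_1_iff_eq_0[of "shift L d q"] by (cases "\<eta> (shift L d q) = 1") auto
  have flow: "x ^ nn_pairs L \<eta> * rate rs x a b
      - (if \<eta> t = 0 then x ^ nn_pairs L s * rate rs x (gap L s d t) (gap L s (-d) t) else 0)
      = x ^ nn_pairs L \<eta> * (rate rs x a 0 - rate rs x b 0)"
  proof (cases "\<eta> t = 0")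
    case False
    then have "\<eta> t = 1" by (metis ne_1_iff_eq_0)
    then have "b = 0" using gap_eq_0_iff[of q L \<eta> "-d"] q occ by (simp add: b_def t_def)
    then show ?thesis using False by simp
  next
    case empty: True
    have d': "-d \<in> {1, -1}" using d by auto
    note jump = d' q occ empty[unfolded t_def]
    have s_eq: "s = swap_sites \<eta> q (shift L (-d) q)" by (simp add: s_def t_def swap_sites_commute)
    have "1 \<le> b" using gap_eq_0_iff[of q L \<eta> "-d"] q occ empty by (simp add: b_def t_def)
    moreover have "x ^ nn_pairs L s * (if a = 0 then x else 1) = x ^ nn_pairs L \<eta> * (if b = 1 then x else 1)"
      using jump_weight[OF jump, of x] by (simp add: s_eq a_def b_def)
    ultimately have "x ^ nn_pairs L \<eta> * rate rs x a b - x ^ nn_pairs L s * rate rs x (Suc a) (b - 1)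
        = x ^ nn_pairs L \<eta> * (rate rs x a 0 - rate rs x b 0)"
      by (rule rate_balance_identity[OF x])
    moreover have "gap L s (-d) t = b - 1" "gap L s d t = Suc a"
      using jump_gap_ahead[OF jump] jump_gap_behind[OF jump] by (simp_all add: s_eq a_def b_def t_def)
    ultimately show ?thesis using empty by simp
  qed
  show ?thesis unfolding a_def[symmetric] b_def[symmetric] using flow out occ by simp
qed

lemma gap_reverse_iff:
  fixes d :: int and k :: nat
  assumes q: "q < L"
  defines "p \<equiv> shift L (d * int (Suc k)) q"
  shows "(\<eta> q = 1 \<and> gap L \<eta> d q = k) \<longleftrightarrow> (\<eta> p = 1 \<and> gap L \<eta> (-d) p = k)"
proof -
  let ?P = "\<lambda>i. \<eta> (shift L (d * int (Suc i)) q) = 1"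
  have reverse: "shift L (- d * int (Suc i)) p = shift L (d * (int k - int i)) q" for i
    unfolding p_def using L_pos by (simp add: shift_shift algebra_simps)
  have reverse_k: "\<eta> (shift L (- d * int (Suc k)) p) = \<eta> q"
    using reverse[of k] q by (simp add: shift_zero)
  have reverse_less: "\<eta> (shift L (- d * int (Suc i)) p) = 1 \<longleftrightarrow> ?P (k - Suc i)" if "i < k" for i
    using reverse[of i] that by (simp add: of_nat_diff)
  have reindex: "(\<forall>i<k. \<not> ?P (k - Suc i)) \<longleftrightarrow> (\<forall>j<k. \<not> ?P j)"
  proof (intro iffI allI impI)
    fix j assume all: "\<forall>i<k. \<not> ?P (k - Suc i)" and j: "j < k"
    have "k - Suc j < k" using j by simp
    with all have "\<not> ?P (k - Suc (k - Suc j))" by blast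
    moreover have "k - Suc (k - Suc j) = j" using j by simp
    ultimately show "\<not> ?P j" by metis
  next
    fix i assume all: "\<forall>j<k. \<not> ?P j" and i: "i < k"
    have "k - Suc i < k" using i by simp
    with all show "\<not> ?P (k - Suc i)" by blast
  qed
  have "(\<forall>i<k. \<eta> (shift L (- d * int (Suc i)) p) \<noteq> 1) \<longleftrightarrow> (\<forall>i<k. \<not> ?P (k - Suc i))"
    using reverse_less by blast
  with reindex have reverse_all: "(\<forall>i<k. \<eta> (shift L (- d * int (Suc i)) p) \<noteq> 1) \<longleftrightarrow> (\<forall>j<k. \<not> ?P j)"
    by simp
  have p_at: "?P k \<longleftrightarrow> \<eta> p = 1" by (simp add: p_def)
  have p: "p < L" unfolding p_def using L_pos by (rule shift_less)
  have "(\<eta> q = 1 \<and> gap L \<eta> d q = k) \<longleftrightarrow> \<eta> q = 1 \<and> ?P k \<and> (\<forall>i<k. \<not> ?P i)"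
    using gap_eq_iff[OF q, of \<eta> d k] by blast
  also have "\<dots> \<longleftrightarrow> \<eta> p = 1 \<and> \<eta> (shift L (- d * int (Suc k)) p) = 1
      \<and> (\<forall>i<k. \<eta> (shift L (- d * int (Suc i)) p) \<noteq> 1)"
    unfolding reverse_k reverse_all p_at by blast
  also have "\<dots> \<longleftrightarrow> (\<eta> p = 1 \<and> gap L \<eta> (-d) p = k)"
    using gap_eq_iff[OF p, of \<eta> "-d" k] by blast
  finally show ?thesis .
qed

lemma sum_gap_reverse:
  assumes d: "d \<in> {1, -1}"
  shows "(\<Sum>q<L. if \<eta> q = 1 then f (gap L \<eta> d q) else 0)
       = (\<Sum>q<L. if \<eta> q = 1 then f (gap L \<eta> (-d) q) else (0::'a::comm_monoid_add))"
proof -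
  have d': "-d \<in> {1, -1}" using d by auto
  have gap_less: "gap L \<eta> e q < L" if "e \<in> {1, -1}" "q < L" "\<eta> q = 1" for e q
    using gap_le_L_minus_2[OF that] three_le_L by linarith
  have spread: "(if \<eta> q = 1 then f (gap L \<eta> e q) else 0)
      = (\<Sum>k<L. if \<eta> q = 1 \<and> gap L \<eta> e q = k then f k else 0)"
    if "e \<in> {1, -1}" "q < L" for e q
    using gap_less[OF that] by (auto simp: sum.delta')
  have "(\<Sum>q<L. if \<eta> q = 1 then f (gap L \<eta> d q) else 0)
      = (\<Sum>q<L. \<Sum>k<L. if \<eta> q = 1 \<and> gap L \<eta> d q = k then f k else 0)"
    using spread[OF d] by simp
  also have "\<dots> = (\<Sum>k<L. \<Sum>q<L. if \<eta> q = 1 \<and> gap L \<eta> d q = k then f k else 0)"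
    by (rule sum.swap)
  also have "\<dots> = (\<Sum>k<L. \<Sum>q<L. (\<lambda>p. if \<eta> p = 1 \<and> gap L \<eta> (-d) p = k then f k else 0)
                              (shift L (d * int (Suc k)) q))"
    using gap_reverse_iff by (intro sum.cong refl) simp
  also have "\<dots> = (\<Sum>k<L. \<Sum>q<L. if \<eta> q = 1 \<and> gap L \<eta> (-d) q = k then f k else 0)"
    by (intro sum.cong refl sum_shift L_pos)
  also have "\<dots> = (\<Sum>q<L. \<Sum>k<L. if \<eta> q = 1 \<and> gap L \<eta> (-d) q = k then f k else 0)"
    by (rule sum.swap)
  also have "\<dots> = (\<Sum>q<L. if \<eta> q = 1 then f (gap L \<eta> (-d) q) else 0)"
    using spread[of "-d"] d' by simp
  finally show ?thesis .
qed

lemma sum_jump_rate_out_of: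
  "(\<Sum>\<eta>'\<in>Omega L N. jump_rate L R d \<eta> \<eta>')
 = (\<Sum>q<L. if \<eta> q = 1 \<and> \<eta> (shift L d q) = 0 then R (gap L \<eta> d q) (gap L \<eta> (-d) q) else 0)"
  unfolding jump_rate_def
proof (subst sum.swap, intro sum.cong refl)
  fix q assume "q \<in> {..<L}"
  then have "swap_sites \<eta> q (shift L d q) \<in> Omega L N"
    using config L_pos by (intro swap_sites_in_Omega shift_less) auto
  moreover have "(if \<eta> q = 1 \<and> \<eta> (shift L d q) = 0 \<and> \<eta>' = swap_sites \<eta> q (shift L d q)
                   then R (gap L \<eta> d q) (gap L \<eta> (-d) q) else 0)
      = (if \<eta>' = swap_sites \<eta> q (shift L d q) then
          (if \<eta> q = 1 \<and> \<eta> (shift L d q) = 0 then R (gap L \<eta> d q) (gap L \<eta> (-d) q) else 0) else 0)" for \<eta>'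
    by auto
  ultimately show "(\<Sum>\<eta>'\<in>Omega L N. if \<eta> q = 1 \<and> \<eta> (shift L d q) = 0 \<and> \<eta>' = swap_sites \<eta> q (shift L d q)
               then R (gap L \<eta> d q) (gap L \<eta> (-d) q) else 0)
      = (if \<eta> q = 1 \<and> \<eta> (shift L d q) = 0 then R (gap L \<eta> d q) (gap L \<eta> (-d) q) else 0)"
    using finite_Omega by (simp add: sum.delta)
qed

lemma sum_jump_rate_into:
  assumes d: "d \<in> {1, -1}"
  shows "(\<Sum>\<eta>'\<in>Omega L N. w \<eta>' * jump_rate L R d \<eta>' \<eta>)
       = (\<Sum>q<L. if \<eta> (shift L (-d) q) = 0 \<and> \<eta> q = 1
            then w (swap_sites \<eta> (shift L (-d) q) q)
                 * R (gap L (swap_sites \<eta> (shift L (-d) q) q) d (shift L (-d) q))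
                     (gap L (swap_sites \<eta> (shift L (-d) q) q) (-d) (shift L (-d) q))
            else 0)"
proof -
  define moved where "moved p = swap_sites \<eta> p (shift L d p)" for p
  define inflow where "inflow p = (if \<eta> p = 0 \<and> \<eta> (shift L d p) = 1
      then w (moved p) * R (gap L (moved p) d p) (gap L (moved p) (-d) p) else 0)" for p
  have "(\<Sum>\<eta>'\<in>Omega L N. w \<eta>' * jump_rate L R d \<eta>' \<eta>) = (\<Sum>p<L. inflow p)"
    unfolding jump_rate_def sum_distrib_left
  proof (subst sum.swap, intro sum.cong refl)
    fix p assume "p \<in> {..<L}"
    then have p: "p < L" by simp
    have neighbour: "p \<noteq> shift L d p" using shift_inj[of L 0 p d] p d three_le_L by (auto simp: shift_zero)
    have "w \<eta>' * (if \<eta>' p = 1 \<and> \<eta>' (shift L d p) = 0 \<and> \<eta> = swap_sites \<eta>' p (shift L d p)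
                   then R (gap L \<eta>' d p) (gap L \<eta>' (-d) p) else 0)
        = (if \<eta>' = moved p then (if \<eta> p = 0 \<and> \<eta> (shift L d p) = 1
             then w \<eta>' * R (gap L \<eta>' d p) (gap L \<eta>' (-d) p) else 0) else 0)" for \<eta>'
      unfolding swap_sites_jump_iff[OF neighbour] moved_def by auto
    moreover have "moved p \<in> Omega L N"
      unfolding moved_def using config p L_pos by (intro swap_sites_in_Omega shift_less)
    ultimately show "(\<Sum>\<eta>'\<in>Omega L N. w \<eta>' * (if \<eta>' p = 1 \<and> \<eta>' (shift L d p) = 0
                   \<and> \<eta> = swap_sites \<eta>' p (shift L d p)
                   then R (gap L \<eta>' d p) (gap L \<eta>' (-d) p) else 0)) = inflow p"
      using finite_Omega by (simp add: sum.delta inflow_def)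
  qed
  also have "\<dots> = (\<Sum>q<L. inflow (shift L (-d) q))"
    by (rule sum_shift[OF L_pos, symmetric])
  also have "\<dots> = (\<Sum>q<L. if \<eta> (shift L (-d) q) = 0 \<and> \<eta> q = 1
            then w (swap_sites \<eta> (shift L (-d) q) q)
                 * R (gap L (swap_sites \<eta> (shift L (-d) q) q) d (shift L (-d) q))
                     (gap L (swap_sites \<eta> (shift L (-d) q) q) (-d) (shift L (-d) q))
            else 0)"
    using L_pos by (intro sum.cong refl) (simp add: inflow_def moved_def shift_shift shift_zero)
  finally show ?thesis .
qed

lemma jump_rate_balance:
  fixes x :: real
  assumes x: "0 < x" and d: "d \<in> {1, -1}"
  shows "(\<Sum>\<eta>'\<in>Omega L N. x ^ nn_pairs L \<eta>' * jump_rate L (rate rs x) d \<eta>' \<eta>)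
       = (\<Sum>\<eta>'\<in>Omega L N. x ^ nn_pairs L \<eta> * jump_rate L (rate rs x) d \<eta> \<eta>')"
proof -
  let ?w = "x ^ nn_pairs L \<eta>"
  let ?R = "rate rs x"
  let ?s = "\<lambda>q. swap_sites \<eta> (shift L (-d) q) q"
  let ?out = "\<lambda>q. if \<eta> q = 1 \<and> \<eta> (shift L d q) = 0 then ?R (gap L \<eta> d q) (gap L \<eta> (-d) q) else 0"
  let ?in = "\<lambda>q. if \<eta> (shift L (-d) q) = 0 \<and> \<eta> q = 1
      then x ^ nn_pairs L (?s q) * ?R (gap L (?s q) d (shift L (-d) q)) (gap L (?s q) (-d) (shift L (-d) q))
      else 0"
  let ?f = "\<lambda>e q. if \<eta> q = 1 then ?R (gap L \<eta> e q) 0 else 0"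
  have out: "(\<Sum>\<eta>'\<in>Omega L N. ?w * jump_rate L ?R d \<eta> \<eta>') = ?w * (\<Sum>q<L. ?out q)"
    by (simp only: sum_distrib_left[symmetric] sum_jump_rate_out_of)
  have "(\<Sum>\<eta>'\<in>Omega L N. ?w * jump_rate L ?R d \<eta> \<eta>')
      - (\<Sum>\<eta>'\<in>Omega L N. x ^ nn_pairs L \<eta>' * jump_rate L ?R d \<eta>' \<eta>)
      = (\<Sum>q<L. ?w * ?out q - ?in q)"
    unfolding out sum_jump_rate_into[OF d] by (simp only: sum_distrib_left sum_subtractf)
  also have "\<dots> = (\<Sum>q<L. ?w * (?f d q - ?f (-d) q))"
  proof (rule sum.cong[OF refl])
    fix q assume "q \<in> {..<L}"
    then have "?w * ?out q - ?in q = (if \<eta> q = 1 then ?w * (?R (gap L \<eta> d q) 0 - ?R (gap L \<eta> (-d) q) 0) else 0)"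
      by (intro site_balance[OF x d]) simp
    then show "?w * ?out q - ?in q = ?w * (?f d q - ?f (-d) q)" by simp
  qed
  also have "\<dots> = ?w * (sum (?f d) {..<L} - sum (?f (-d)) {..<L})"
    by (simp only: sum_subtractf[symmetric] sum_distrib_left)
  also have "\<dots> = 0"
    using sum_gap_reverse[OF d, of "\<lambda>k. ?R k 0"] by simp
  finally show ?thesis by simp
qed
end

theorem theorem1:
  fixes L N :: nat and x :: real and rs ls :: "nat \<Rightarrow> real"
  assumes "2 \<le> N" and "N \<le> L - 1" and "x > 0"
    and "\<forall>k n. k + n \<le> L - N \<longrightarrow> 0 \<le> rate rs x k n \<and> 0 \<le> rate ls x k n"
  shows "invariant_measure (Omega L N) (Q L rs ls x) (pihat L N x)"
  unfolding invariant_measure_def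
proof
  fix \<eta> assume "\<eta> \<in> Omega L N"
  then interpret particle_config L N \<eta> using assms(1,2) by unfold_locales linarith+
  have "(\<Sum>\<eta>'\<in>Omega L N. x ^ nn_pairs L \<eta>' * Q L rs ls x \<eta>' \<eta>)
      = (\<Sum>\<eta>'\<in>Omega L N. x ^ nn_pairs L \<eta> * Q L rs ls x \<eta> \<eta>')"
    using jump_rate_balance[OF assms(3), of 1 rs] jump_rate_balance[OF assms(3), of "-1" ls]
    by (simp add: Q_eq_jump_rates[OF L_pos] distrib_left sum.distrib)
  then show "(\<Sum>\<eta>'\<in>Omega L N. pihat L N x \<eta>' * Q L rs ls x \<eta>' \<eta>)
      = (\<Sum>\<eta>'\<in>Omega L N. pihat L N x \<eta> * Q L rs ls x \<eta> \<eta>')"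
    by (simp add: pihat_def flip: sum_divide_distrib)
qed

end
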